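(* Consider the primal linear program $$\rho=\inf_{v\in\mathscr C(\mathcal Q)}\int_{\mathcal Q} v(q)\,dq\quad\text{s.t. } v(q)-x\ge 0\ \text{for all }(q,x,y)\in\mathcal Z,$$ and the dual linear program $$\rho^*=\sup_{\mu\in\mathscr M^+(\mathcal Z)}\int_{\mathcal Z} x\,d\mu(q,x,y)\quad\text{s.t. }\int_{\mathcal Z} q^\alpha\,d\mu=\int_{\mathcal Q} q^\alpha\,dq\ \text{ for all }\alpha\in\mathbb N^n .$$ Then the supremum in the dual program is attained, and there is no duality gap: $\rho=\rho^*$.
   Context: Let $n\ge1$, $\mathcal Q=[-1,1]^n=\{q\in\mathbb R^n: 1-q_j^2\ge0,\ j=1,\dots,n\}$, and $dq$ denote Lebesgue measure. Let $m\ge1$ and $p(q,s)=\sum_{k=0}^m p_k(q)s^k$ with $p_k\in\mathbb R[q]$ and $p_m\equiv1$, where $q\in\mathcal Q$ and $s\in\mathbb C$. Writing $s=x+iy$ with $x,y\in\mathbb R$, define the real polynomials $p_\Re,p_\Im\in\mathbb R[q,x,y]$ by $p(q,x+iy)=p_\Re(q,x,y)+i\,p_\Im(q,x,y)$. Let $\mathcal Z=\{(q,x,y)\in\mathbb R^n\times\mathbb R^2: q\in\mathcal Q,\ p_\Re(q,x,y)=p_\Im(q,x,y)=0\}$ (a compact set). $\mathscr C(\mathcal Q)$ denotes the continuous real functions on $\mathcal Q$, $\mathscr M^+(\mathcal Z)$ the cone of finite nonnegative Borel measures supported on $\mathcal Z$, and $q^\alpha=q_1^{\alpha_1}\cdots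 q_n^{\alpha_n}$. *)

theory Defs
  imports "HOL-Analysis.Analysis"
begin

definition cubeQ :: "(real^'n) set" where
  "cubeQ = {q. \<forall>j. 1 - (q$j)^2 \<ge> 0}"

definition pval :: "nat \<Rightarrow> (nat \<Rightarrow> real^'n \<Rightarrow> real) \<Rightarrow> real^'n \<Rightarrow> complex \<Rightarrow> complex" where
  "pval m p q s = (\<Sum>k\<le>m. complex_of_real (p k q) * s ^ k)"

definition p_Re :: "nat \<Rightarrow> (nat \<Rightarrow> real^'n \<Rightarrow> real) \<Rightarrow> real^'n \<Rightarrow> real \<Rightarrow> real \<Rightarrow> real" where
  "p_Re m p q x y = Re (pval m p q (Complex x y))"

definition p_Im :: "nat \<Rightarrow> (nat \<Rightarrow> real^'n \<Rightarrow> real) \<Rightarrow> real^'n \<Rightarrow> real \<Rightarrow> real \<Rightarrow> real" where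
  "p_Im m p q x y = Im (pval m p q (Complex x y))"

definition zeroSet :: "nat \<Rightarrow> (nat \<Rightarrow> real^'n \<Rightarrow> real) \<Rightarrow> ((real^'n) \<times> real \<times> real) set" where
  "zeroSet m p = {(q,x,y). q \<in> cubeQ \<and> p_Re m p q x y = 0 \<and> p_Im m p q x y = 0}"

definition monom_q :: "('n::finite \<Rightarrow> nat) \<Rightarrow> real^'n \<Rightarrow> real" where
  "monom_q \<alpha> q = (\<Prod>j\<in>UNIV. (q$j) ^ (\<alpha> j))"

definition primal_value :: "nat \<Rightarrow> (nat \<Rightarrow> real^'n \<Rightarrow> real) \<Rightarrow> ereal" where
  "primal_value m p = Inf {ereal (LINT q:cubeQ|lborel. v q) | v.
      continuous_on cubeQ v \<and> (\<forall>(q,x,y)\<in>zeroSet m p. v q - x \<ge> 0)}"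

definition meas_on_Z :: "nat \<Rightarrow> (nat \<Rightarrow> real^'n \<Rightarrow> real) \<Rightarrow> ((real^'n) \<times> real \<times> real) measure \<Rightarrow> bool" where
  "meas_on_Z m p \<mu> \<longleftrightarrow> sets \<mu> = sets borel \<and> finite_measure \<mu> \<and>
      emeasure \<mu> (- zeroSet m p) = 0"

definition dual_feasible :: "nat \<Rightarrow> (nat \<Rightarrow> (real^'n::finite) \<Rightarrow> real) \<Rightarrow> ((real^'n) \<times> real \<times> real) measure \<Rightarrow> bool" where
  "dual_feasible m p \<mu> \<longleftrightarrow> meas_on_Z m p \<mu> \<and>
      (\<forall>\<alpha>::'n \<Rightarrow> nat. (\<integral>z. monom_q \<alpha> (fst z) \<partial>\<mu>) = (LINT q:cubeQ|lborel. monom_q \<alpha> q))"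

definition dual_objective :: "((real^'n) \<times> real \<times> real) measure \<Rightarrow> real" where
  "dual_objective \<mu> = (\<integral>z. fst (snd z) \<partial>\<mu>)"

definition dual_value :: "nat \<Rightarrow> (nat \<Rightarrow> (real^'n::finite) \<Rightarrow> real) \<Rightarrow> ereal" where
  "dual_value m p = Sup {ereal (dual_objective \<mu>) | \<mu>. dual_feasible m p \<mu>}"

end

theory Submission
  imports Defs "HOL-Computational_Algebra.Fundamental_Theorem_Algebra"
begin

text \<open>
  Let \<open>F q\<close> be the largest real part of a root of \<open>p(q,\<cdot>)\<close>. Since \<open>p(q,\<cdot>)\<close> is monic, its
  roots depend continuously on \<open>q\<close>, so \<open>F\<close> is continuous and \<open>v = F\<close> is feasible for the
  primal program. Pushing Lebesgue measure on \<open>Q\<close> forward along \<open>q \<mapsto> (q, s(q))\<close>, where \<open>s(q)\<close>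
  is a root with real part \<open>F q\<close> chosen measurably, gives a dual feasible measure with
  objective \<open>\<integral>\<^sub>Q F\<close>. Conversely, for dual feasible \<open>\<mu>\<close> and primal feasible \<open>v\<close> we have
  \<open>\<integral> x d\<mu> \<le> \<integral> v(q) d\<mu>\<close>, and the moment constraints together with the Stone--Weierstrass
  theorem force \<open>\<integral> v(q) d\<mu> = \<integral>\<^sub>Q v\<close>. Hence \<open>\<rho>\<^sup>* \<le> \<rho> \<le> \<integral>\<^sub>Q F \<le> \<rho>\<^sup>*\<close>, and the measure above
  attains \<open>\<rho>\<^sup>*\<close>.
\<close>

section \<open>Roots of monic polynomials\<close>

lemma monic_sum_factor:
  fixes c :: "nat \<Rightarrow> complex"
  assumes "c m = 1"
  obtains r where "\<And>s. (\<Sum>k\<le>m. c k * s ^ k) = (\<Prod>i<m. s - r i)"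
proof -
  define P where "P = (\<Sum>k\<le>m. monom (c k) k)"
  have coeff_P: "coeff P k = (if k \<le> m then c k else 0)" for k
    by (simp add: P_def coeff_sum coeff_monom)
  have "degree P = m"
    by (rule antisym; (rule degree_le le_degree)) (auto simp: coeff_P assms)
  moreover obtain r where "smult (lead_coeff P) (\<Prod>i<degree P. [:-r i, 1:]) = P"
    by (rule complex_poly_decompose')
  ultimately have P_factor: "P = (\<Prod>i<m. [:-r i, 1:])"
    using assms by (simp add: coeff_P)
  have "(\<Sum>k\<le>m. c k * s ^ k) = (\<Prod>i<m. s - r i)" for s
  proof -
    have "(\<Sum>k\<le>m. c k * s ^ k) = poly P s" by (simp add: P_def poly_sum poly_monom)
    also have "\<dots> = (\<Prod>i<m. s - r i)" by (simp add: P_factor poly_prod)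
    finally show ?thesis .
  qed
  with that show ?thesis by blast
qed

lemma monic_roots_finite_nonempty:
  fixes c :: "nat \<Rightarrow> complex"
  assumes "c m = 1" "1 \<le> m"
  shows "finite {s. (\<Sum>k\<le>m. c k * s ^ k) = 0}" "{s. (\<Sum>k\<le>m. c k * s ^ k) = 0} \<noteq> {}"
proof -
  obtain r where r: "\<And>s. (\<Sum>k\<le>m. c k * s ^ k) = (\<Prod>i<m. s - r i)"
    using monic_sum_factor assms(1) by blast
  have roots: "{s. (\<Sum>k\<le>m. c k * s ^ k) = 0} = r ` {..<m}" by (auto simp: r)
  show "finite {s. (\<Sum>k\<le>m. c k * s ^ k) = 0}" by (simp add: roots)
  show "{s. (\<Sum>k\<le>m. c k * s ^ k) = 0} \<noteq> {}" using assms(2) by (simp add: roots lessThan_empty_iff)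
qed

lemma monic_root_norm_le:
  fixes c :: "nat \<Rightarrow> 'a::real_normed_field"
  assumes "c m = 1" "1 \<le> m" and root: "(\<Sum>k\<le>m. c k * s ^ k) = 0"
  shows "norm s \<le> 1 + (\<Sum>k<m. norm (c k))"
proof (cases "norm s \<le> 1")
  case True
  then show ?thesis by (smt (verit) sum_nonneg norm_ge_zero)
next
  case False
  have "s ^ m = - (\<Sum>k<m. c k * s ^ k)"
    using root assms(1) by (simp add: lessThan_Suc_atMost[symmetric] add_eq_0_iff add.commute)
  then have "norm s * norm s ^ (m - 1) = norm (\<Sum>k<m. c k * s ^ k)"
    using assms(2) by (metis norm_minus_cancel norm_power power_eq_if not_one_le_zero)
  also have "\<dots> \<le> (\<Sum>k<m. norm (c k) * norm s ^ (m - 1))"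
    using False by (intro order_trans[OF norm_sum] sum_mono)
      (auto simp: norm_mult norm_power intro!: mult_left_mono power_increasing)
  finally have "norm s * norm s ^ (m - 1) \<le> (\<Sum>k<m. norm (c k)) * norm s ^ (m - 1)"
    by (simp add: sum_distrib_right)
  moreover have "0 < norm s ^ (m - 1)" using False by (intro zero_less_power) auto
  ultimately have "norm s \<le> (\<Sum>k<m. norm (c k))" by simp
  then show ?thesis by simp
qed

lemma prod_norm_less_power:
  fixes r :: "nat \<Rightarrow> 'a::real_normed_field"
  assumes "0 \<le> e" "norm (\<Prod>i<m. s - r i) < e ^ m"
  obtains i where "i < m" "norm (s - r i) < e"
proof -
  have "\<not> (\<forall>i<m. e \<le> norm (s - r i))"
  proof
    assume "\<forall>i<m. e \<le> norm (s - r i)"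
    then have "e ^ m \<le> (\<Prod>i<m. norm (s - r i))"
      using prod_mono[of "{..<m}" "\<lambda>_. e"] assms(1) by simp
    with assms(2) show False by (simp add: prod_norm)
  qed
  with that show ?thesis by (meson not_le)
qed

lemma monic_near_root:
  fixes c :: "nat \<Rightarrow> complex"
  assumes "c m = 1" "0 \<le> e" "norm (\<Sum>k\<le>m. c k * s ^ k) < e ^ m"
  obtains t where "(\<Sum>k\<le>m. c k * t ^ k) = 0" "norm (s - t) < e"
proof -
  obtain r where r: "\<And>s. (\<Sum>k\<le>m. c k * s ^ k) = (\<Prod>i<m. s - r i)"
    using monic_sum_factor assms(1) by blast
  have "norm (\<Prod>i<m. s - r i) < e ^ m" using assms(3) by (simp add: r)
  then obtain i where "i < m" "norm (s - r i) < e"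
    using prod_norm_less_power assms(2) by blast
  moreover from \<open>i < m\<close> have "(\<Sum>k\<le>m. c k * r i ^ k) = 0" by (force simp: r)
  ultimately show ?thesis using that by blast
qed

lemma norm_sum_power_diff_le:
  fixes c d :: "nat \<Rightarrow> 'a::real_normed_field"
  assumes "norm s \<le> R"
  shows "norm ((\<Sum>k\<le>m. c k * s ^ k) - (\<Sum>k\<le>m. d k * s ^ k)) \<le> (\<Sum>k\<le>m. norm (c k - d k) * R ^ k)"
proof -
  have "norm ((\<Sum>k\<le>m. c k * s ^ k) - (\<Sum>k\<le>m. d k * s ^ k)) = norm (\<Sum>k\<le>m. (c k - d k) * s ^ k)"
    by (simp add: sum_subtractf[symmetric] algebra_simps)
  also have "\<dots> \<le> (\<Sum>k\<le>m. norm (c k - d k) * R ^ k)"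
    using assms by (intro order_trans[OF norm_sum] sum_mono)
      (auto simp: norm_mult norm_power intro!: mult_left_mono power_mono)
  finally show ?thesis .
qed

definition root_abscissa :: "(complex \<Rightarrow> complex) \<Rightarrow> real" where
  "root_abscissa f = Max (Re ` {s. f s = 0})"

lemma root_abscissa_ge:
  assumes "finite {s. f s = 0}" "f s = 0"
  shows "Re s \<le> root_abscissa f"
  unfolding root_abscissa_def using assms by (intro Max_ge) auto

lemma root_abscissa_attained:
  assumes "finite {s. f s = 0}" "{s. f s = 0} \<noteq> {}"
  obtains s where "f s = 0" "Re s = root_abscissa f"
proof -
  have "root_abscissa f \<in> Re ` {s. f s = 0}"
    unfolding root_abscissa_def using assms by (intro Max_in) auto
  with that show ?thesis by auto
qed

lemma root_abscissa_less_add: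
  fixes c d :: "nat \<Rightarrow> complex"
  assumes "c m = 1" "d m = 1" "1 \<le> m" "0 < e"
    and close: "\<And>s. (\<Sum>k\<le>m. c k * s ^ k) = 0 \<Longrightarrow> norm (\<Sum>k\<le>m. d k * s ^ k) < e ^ m"
  shows "root_abscissa (\<lambda>s. \<Sum>k\<le>m. c k * s ^ k) < root_abscissa (\<lambda>s. \<Sum>k\<le>m. d k * s ^ k) + e"
proof -
  obtain s where s: "(\<Sum>k\<le>m. c k * s ^ k) = 0" "Re s = root_abscissa (\<lambda>s. \<Sum>k\<le>m. c k * s ^ k)"
    using root_abscissa_attained[OF monic_roots_finite_nonempty[of c m, OF assms(1,3)]] by blast
  obtain t where t: "(\<Sum>k\<le>m. d k * t ^ k) = 0" "norm (s - t) < e"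
    using monic_near_root[OF assms(2) less_imp_le[OF assms(4)] close[OF s(1)]] by blast
  have "Re s - Re t < e" using t(2) abs_Re_le_cmod[of "s - t"] by auto
  moreover have "Re t \<le> root_abscissa (\<lambda>s. \<Sum>k\<le>m. d k * s ^ k)"
    using root_abscissa_ge[OF monic_roots_finite_nonempty(1)[of d m, OF assms(2,3)] t(1)] .
  ultimately show ?thesis using s(2) by simp
qed

lemma root_abscissa_dist_less:
  fixes c d :: "nat \<Rightarrow> complex"
  assumes "c m = 1" "d m = 1" "1 \<le> m" "0 < e"
    and roots_bounded: "\<And>s. (\<Sum>k\<le>m. c k * s ^ k) = 0 \<or> (\<Sum>k\<le>m. d k * s ^ k) = 0 \<Longrightarrow> norm s \<le> R"
    and close: "\<And>s. norm s \<le> R \<Longrightarrow> norm ((\<Sum>k\<le>m. c k * s ^ k) - (\<Sum>k\<le>m. d k * s ^ k)) < e ^ m"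
  shows "dist (root_abscissa (\<lambda>s. \<Sum>k\<le>m. c k * s ^ k)) (root_abscissa (\<lambda>s. \<Sum>k\<le>m. d k * s ^ k)) < e"
proof -
  have "root_abscissa (\<lambda>s. \<Sum>k\<le>m. c k * s ^ k) < root_abscissa (\<lambda>s. \<Sum>k\<le>m. d k * s ^ k) + e"
  proof (rule root_abscissa_less_add[of c m d, OF assms(1-4)])
    fix s assume root: "(\<Sum>k\<le>m. c k * s ^ k) = 0"
    then have "norm s \<le> R" using roots_bounded by blast
    with root show "norm (\<Sum>k\<le>m. d k * s ^ k) < e ^ m" using close[of s] by simp
  qed
  moreover have "root_abscissa (\<lambda>s. \<Sum>k\<le>m. d k * s ^ k) < root_abscissa (\<lambda>s. \<Sum>k\<le>m. c k * s ^ k) + e"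
  proof (rule root_abscissa_less_add[of d m c, OF assms(2,1,3,4)])
    fix s assume root: "(\<Sum>k\<le>m. d k * s ^ k) = 0"
    then have "norm s \<le> R" using roots_bounded by blast
    with root show "norm (\<Sum>k\<le>m. c k * s ^ k) < e ^ m" using close[of s] by simp
  qed
  ultimately show ?thesis unfolding dist_real_def by linarith
qed

lemma isCont_root_abscissa:
  fixes c :: "'a::metric_space \<Rightarrow> nat \<Rightarrow> complex"
  assumes "1 \<le> m" "\<And>x. c x m = 1" "\<And>k. k \<le> m \<Longrightarrow> isCont (\<lambda>x. c x k) x0"
  shows "isCont (\<lambda>x. root_abscissa (\<lambda>s. \<Sum>k\<le>m. c x k * s ^ k)) x0"
  unfolding isCont_def tendsto_iff
proof (intro allI impI)
  fix e :: real assume "0 < e"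
  \<comment> \<open>Near \<open>x0\<close>, all roots of both polynomials lie in the disc of radius \<open>R\<close>, on which they differ by \<open>D x\<close>.\<close>
  define R where "R = 2 + (\<Sum>k<m. norm (c x0 k))"
  define D where "D x = (\<Sum>k\<le>m. norm (c x k - c x0 k) * R ^ k)" for x
  have "((\<lambda>x. \<Sum>k<m. norm (c x k)) \<longlongrightarrow> (\<Sum>k<m. norm (c x0 k))) (at x0)"
    using assms(3) by (intro tendsto_intros) (auto simp: isCont_def)
  then have "\<forall>\<^sub>F x in at x0. (\<Sum>k<m. norm (c x k)) < 1 + (\<Sum>k<m. norm (c x0 k))"
    by (rule order_tendstoD) simp
  moreover have "(D \<longlongrightarrow> (\<Sum>k\<le>m. norm (c x0 k - c x0 k) * R ^ k)) (at x0)"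
    unfolding D_def using assms(3) by (intro tendsto_intros) (auto simp: isCont_def)
  then have "\<forall>\<^sub>F x in at x0. D x < e ^ m"
    by (rule order_tendstoD) (simp add: \<open>0 < e\<close>)
  ultimately show "\<forall>\<^sub>F x in at x0.
      dist (root_abscissa (\<lambda>s. \<Sum>k\<le>m. c x k * s ^ k)) (root_abscissa (\<lambda>s. \<Sum>k\<le>m. c x0 k * s ^ k)) < e"
  proof eventually_elim
    case (elim x)
    show ?case
    proof (rule root_abscissa_dist_less[of "c x" m "c x0", OF assms(2,2,1) \<open>0 < e\<close>])
      fix s assume "(\<Sum>k\<le>m. c x k * s ^ k) = 0 \<or> (\<Sum>k\<le>m. c x0 k * s ^ k) = 0"
      then obtain y where root: "(\<Sum>k\<le>m. c y k * s ^ k) = 0" and "y = x \<or> y = x0" by blast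
      then have "(\<Sum>k<m. norm (c y k)) \<le> 1 + (\<Sum>k<m. norm (c x0 k))"
        using elim(1) by (auto simp: sum_nonneg)
      with monic_root_norm_le[OF assms(2,1) root] show "norm s \<le> R" unfolding R_def by linarith
    next
      fix s :: complex assume "norm s \<le> R"
      from norm_sum_power_diff_le[OF this] elim(2)
      show "norm ((\<Sum>k\<le>m. c x k * s ^ k) - (\<Sum>k\<le>m. c x0 k * s ^ k)) < e ^ m"
        unfolding D_def by (rule le_less_trans)
    qed
  qed
qed

section \<open>Measurable selection\<close>

lemma borel_fst_image_closed:
  fixes S :: "('a::euclidean_space \<times> 'b::euclidean_space) set"
  assumes "closed S"
  shows "fst ` S \<in> sets borel"
proof -
  have fst_S: "fst ` S = (\<Union>N::nat. fst ` (S \<inter> cball 0 (real N)))"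
  proof (intro equalityI subsetI)
    fix x assume "x \<in> fst ` S"
    then obtain z where "z \<in> S" "x = fst z" by blast
    moreover have "norm z \<le> real (nat \<lceil>norm z\<rceil>)" by linarith
    ultimately have "x \<in> fst ` (S \<inter> cball 0 (real (nat \<lceil>norm z\<rceil>)))" by auto
    then show "x \<in> (\<Union>N. fst ` (S \<inter> cball 0 (real N)))" by blast
  qed auto
  have "compact (fst ` (S \<inter> cball 0 r))" for r
    using assms by (intro compact_continuous_image continuous_on_fst continuous_on_id closed_Int_compact) auto
  then show ?thesis
    unfolding fst_S by (intro sets.countable_UN) (auto intro: borel_closed compact_imp_closed)
qed

lemma borel_measurable_Min_section:
  fixes S :: "('a::euclidean_space \<times> real) set"
  assumes "closed S" "\<And>x. finite {y. (x, y) \<in> S}" "\<And>x. \<exists>y. (x, y) \<in> S"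
  shows "(\<lambda>x. Min {y. (x, y) \<in> S}) \<in> borel_measurable borel"
  unfolding borel_measurable_iff_le
proof
  fix c :: real
  have "{x \<in> space borel. Min {y. (x, y) \<in> S} \<le> c} = fst ` (S \<inter> {z. snd z \<le> c})"
    using assms(2,3) by (force simp: Min_le_iff)
  moreover have "closed (S \<inter> {z. snd z \<le> c})"
    by (intro closed_Int assms(1) closed_Collect_le continuous_intros)
  ultimately show "{x \<in> space borel. Min {y. (x, y) \<in> S} \<le> c} \<in> sets borel"
    by (simp add: borel_fst_image_closed)
qed

section \<open>Monomials\<close>

lemma monom_q_add: "monom_q (\<lambda>j. \<alpha> j + \<beta> j) q = monom_q \<alpha> q * monom_q \<beta> q"
  by (simp add: monom_q_def power_add prod.distrib)

lemma monom_q_zero: "monom_q (\<lambda>_. 0) q = 1"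
  by (simp add: monom_q_def)

lemma monom_q_unit: "monom_q (\<lambda>j. if j = i then 1 else 0) q = q $ i"
proof -
  have "monom_q (\<lambda>j. if j = i then 1 else 0) q = (\<Prod>j\<in>UNIV. if j = i then q $ j else 1)"
    unfolding monom_q_def by (intro prod.cong) auto
  then show ?thesis by simp
qed

lemma continuous_on_monom_q: "continuous_on S (monom_q \<alpha>)"
  unfolding monom_q_def by (intro continuous_intros)

definition in_monomial_span :: "(real^'n \<Rightarrow> real) \<Rightarrow> bool" where
  "in_monomial_span g \<longleftrightarrow> (\<exists>A c. finite A \<and> (\<forall>q. g q = (\<Sum>\<alpha>\<in>A. c \<alpha> * monom_q \<alpha> q)))"

lemma in_monomial_span_const: "in_monomial_span (\<lambda>_. a)"
  unfolding in_monomial_span_def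
  by (intro exI[of _ "{\<lambda>_. 0}"] exI[of _ "\<lambda>_. a"]) (simp add: monom_q_zero)

lemma in_monomial_span_linear:
  fixes f :: "real^'n \<Rightarrow> real"
  assumes "linear f"
  shows "in_monomial_span f"
proof -
  define e where "e i = (\<lambda>j. if j = i then 1 else (0::nat))" for i :: 'n
  define a where "a \<alpha> = f (\<chi> j. of_nat (\<alpha> j))" for \<alpha> :: "'n \<Rightarrow> nat"
  have "inj e"
  proof (rule injI)
    fix i j assume "e i = e j"
    then have "e i i = e j i" by simp
    then show "i = j" by (simp add: e_def split: if_splits)
  qed
  have "f q = (\<Sum>\<alpha>\<in>range e. a \<alpha> * monom_q \<alpha> q)" for q
  proof -
    have "f q = f (\<Sum>i\<in>UNIV. q $ i *\<^sub>R axis i 1)"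
      using basis_expansion[of q] by (simp add: scalar_mult_eq_scaleR)
    also have "\<dots> = (\<Sum>i\<in>UNIV. q $ i * f (axis i 1))"
      by (simp add: linear_sum[OF assms] linear_scale[OF assms])
    also have "\<dots> = (\<Sum>i\<in>UNIV. a (e i) * monom_q (e i) q)"
    proof -
      have "monom_q (e i) q = q $ i" "(\<chi> j. of_nat (e i j)) = axis i (1::real)" for i
        unfolding e_def by (rule monom_q_unit) (simp add: axis_def vec_eq_iff)
      then show ?thesis by (simp add: a_def mult.commute)
    qed
    also have "\<dots> = (\<Sum>\<alpha>\<in>range e. a \<alpha> * monom_q \<alpha> q)"
      by (simp add: sum.reindex[OF \<open>inj e\<close>])
    finally show ?thesis .
  qed
  then show ?thesis
    unfolding in_monomial_span_def by (intro exI[of _ "range e"] exI[of _ a]) simp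
qed

lemma in_monomial_span_add:
  fixes f g :: "real^'n \<Rightarrow> real"
  assumes "in_monomial_span f" "in_monomial_span g"
  shows "in_monomial_span (\<lambda>q. f q + g q)"
proof -
  obtain A c B d where A: "finite A" "\<And>q. f q = (\<Sum>\<alpha>\<in>A. c \<alpha> * monom_q \<alpha> q)"
    and B: "finite B" "\<And>q. g q = (\<Sum>\<alpha>\<in>B. d \<alpha> * monom_q \<alpha> q)"
    using assms unfolding in_monomial_span_def by blast
  define cd where "cd \<alpha> = (if \<alpha> \<in> A then c \<alpha> else 0) + (if \<alpha> \<in> B then d \<alpha> else 0)" for \<alpha>
  have "f q + g q = (\<Sum>\<alpha>\<in>A \<union> B. cd \<alpha> * monom_q \<alpha> q)" for q
  proof -
    have "(\<Sum>\<alpha>\<in>A \<union> B. cd \<alpha> * monom_q \<alpha> q) =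
        (\<Sum>\<alpha>\<in>A \<union> B. if \<alpha> \<in> A then c \<alpha> * monom_q \<alpha> q else 0) +
        (\<Sum>\<alpha>\<in>A \<union> B. if \<alpha> \<in> B then d \<alpha> * monom_q \<alpha> q else 0)"
      unfolding cd_def sum.distrib[symmetric] by (intro sum.cong refl) (auto simp: distrib_right)
    also have "\<dots> = f q + g q"
      using A B by (simp add: sum.inter_restrict[symmetric] Int_absorb1)
    finally show ?thesis by simp
  qed
  with A(1) B(1) show ?thesis
    unfolding in_monomial_span_def by (intro exI[of _ "A \<union> B"] exI[of _ cd]) simp
qed

lemma in_monomial_span_mult:
  fixes f g :: "real^'n \<Rightarrow> real"
  assumes "in_monomial_span f" "in_monomial_span g"
  shows "in_monomial_span (\<lambda>q. f q * g q)"
proof -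
  obtain A c B d where A: "finite A" "\<And>q. f q = (\<Sum>\<alpha>\<in>A. c \<alpha> * monom_q \<alpha> q)"
    and B: "finite B" "\<And>q. g q = (\<Sum>\<alpha>\<in>B. d \<alpha> * monom_q \<alpha> q)"
    using assms unfolding in_monomial_span_def by blast
  define sum_exp where "sum_exp \<alpha>\<beta> = (\<lambda>j. fst \<alpha>\<beta> j + snd \<alpha>\<beta> j)" for \<alpha>\<beta> :: "('n \<Rightarrow> nat) \<times> ('n \<Rightarrow> nat)"
  define cd where "cd \<gamma> = (\<Sum>\<alpha>\<beta>\<in>{\<alpha>\<beta> \<in> A \<times> B. sum_exp \<alpha>\<beta> = \<gamma>}. c (fst \<alpha>\<beta>) * d (snd \<alpha>\<beta>))" for \<gamma>
  have "f q * g q = (\<Sum>\<gamma>\<in>sum_exp ` (A \<times> B). cd \<gamma> * monom_q \<gamma> q)" for q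
  proof -
    have "f q * g q = (\<Sum>\<alpha>\<beta>\<in>A \<times> B. c (fst \<alpha>\<beta>) * d (snd \<alpha>\<beta>) * monom_q (sum_exp \<alpha>\<beta>) q)"
      by (simp add: A B sum_exp_def sum_product sum.cartesian_product monom_q_add mult_ac case_prod_beta')
    also have "\<dots> = (\<Sum>\<gamma>\<in>sum_exp ` (A \<times> B). \<Sum>\<alpha>\<beta>\<in>{\<alpha>\<beta> \<in> A \<times> B. sum_exp \<alpha>\<beta> = \<gamma>}.
        c (fst \<alpha>\<beta>) * d (snd \<alpha>\<beta>) * monom_q (sum_exp \<alpha>\<beta>) q)"
      by (rule sum.group[symmetric]) (use A B in auto)
    also have "\<dots> = (\<Sum>\<gamma>\<in>sum_exp ` (A \<times> B). cd \<gamma> * monom_q \<gamma> q)"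
      unfolding cd_def sum_distrib_right by (intro sum.cong refl) auto
    finally show ?thesis .
  qed
  with A(1) B(1) show ?thesis
    unfolding in_monomial_span_def by (intro exI[of _ "sum_exp ` (A \<times> B)"] exI[of _ cd]) simp
qed

lemma real_polynomial_function_in_monomial_span:
  "real_polynomial_function g \<Longrightarrow> in_monomial_span g"
proof (induct rule: real_polynomial_function.induct)
  case (linear f)
  then show ?case by (intro in_monomial_span_linear bounded_linear.linear)
next
  case (const a)
  then show ?case by (rule in_monomial_span_const)
next
  case (add f g)
  show ?case by (rule in_monomial_span_add[OF add(2,4)])
next
  case (mult f g)
  show ?case by (rule in_monomial_span_mult[OF mult(2,4)])
qed

section \<open>Measures with equal moments\<close>

definition finite_borel_measure_on :: "'a::topological_space set \<Rightarrow> 'a measure \<Rightarrow> bool" where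
  "finite_borel_measure_on K M \<longleftrightarrow> finite_measure M \<and> sets M = sets borel \<and> (AE x in M. x \<in> K)"

lemma integrable_continuous_on_support:
  fixes f :: "'a::metric_space \<Rightarrow> real"
  assumes "finite_borel_measure_on K M" "compact K" "continuous_on K f" "f \<in> borel_measurable borel"
  shows "integrable M f"
proof -
  obtain B where B: "\<And>x. x \<in> K \<Longrightarrow> norm (f x) \<le> B"
    using compact_imp_bounded[OF compact_continuous_image[OF assms(3,2)]] by (auto simp: bounded_iff)
  have fin: "finite_measure M" and sets: "sets M = sets borel" and K: "AE x in M. x \<in> K"
    using assms(1) by (auto simp: finite_borel_measure_on_def)
  have "AE x in M. norm (f x) \<le> B" using K by eventually_elim (rule B)
  moreover have "f \<in> borel_measurable M"
    using assms(4) measurable_cong_sets[OF sets refl] by blast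
  ultimately show ?thesis by (rule finite_measure.integrable_const_bound[OF fin])
qed

lemma integrable_indicator_continuous_on:
  fixes v :: "'a::metric_space \<Rightarrow> real"
  assumes "finite_borel_measure_on K M" "compact K" "continuous_on K v"
  shows "integrable M (\<lambda>x. indicator K x * v x)"
proof (rule integrable_continuous_on_support[OF assms(1,2)])
  show "continuous_on K (\<lambda>x. indicator K x * v x)"
    using assms(3) by (rule continuous_on_eq) simp
  show "(\<lambda>x. indicator K x * v x) \<in> borel_measurable borel"
    using borel_measurable_continuous_on_indicator[OF borel_compact[OF assms(2)] assms(3)] by simp
qed

lemma abs_integral_diff_le:
  fixes f g :: "'a::topological_space \<Rightarrow> real"
  assumes "finite_borel_measure_on K M" "integrable M f" "integrable M g"
    and close: "\<And>x. x \<in> K \<Longrightarrow> \<bar>f x - g x\<bar> \<le> e"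
  shows "\<bar>(\<integral>x. f x \<partial>M) - (\<integral>x. g x \<partial>M)\<bar> \<le> e * measure M (space M)"
proof -
  have fin: "finite_measure M" and K: "AE x in M. x \<in> K"
    using assms(1) by (auto simp: finite_borel_measure_on_def)
  have int_e: "integrable M (\<lambda>_. e)" by (rule finite_measure.integrable_const[OF fin])
  have "AE x in M. f x \<le> g x + e" "AE x in M. g x \<le> f x + e"
    using K by (eventually_elim, use close in \<open>force simp: abs_le_iff\<close>)+
  then have "(\<integral>x. f x \<partial>M) \<le> (\<integral>x. g x + e \<partial>M)" "(\<integral>x. g x \<partial>M) \<le> (\<integral>x. f x + e \<partial>M)"
    using integral_mono_AE[OF assms(2) Bochner_Integration.integrable_add[OF assms(3) int_e]]
      integral_mono_AE[OF assms(3) Bochner_Integration.integrable_add[OF assms(2) int_e]]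
    by blast+
  then show ?thesis
    using assms(2,3) int_e by (simp add: abs_le_iff mult.commute)
qed

lemma borel_measurable_fst_compose:
  "f \<in> borel_measurable borel \<Longrightarrow> (\<lambda>z. f (fst z)) \<in> borel_measurable borel"
  by (rule measurable_compose[OF borel_measurable_continuous_onI[OF continuous_on_fst[OF continuous_on_id]]])

lemma finite_borel_measure_on_distr:
  assumes "finite_borel_measure_on K M" "f \<in> borel_measurable borel" "L \<in> sets borel"
    and "\<And>x. x \<in> K \<Longrightarrow> f x \<in> L"
  shows "finite_borel_measure_on L (distr M borel f)"
proof -
  have fin: "finite_measure M" and sets: "sets M = sets borel" and K: "AE x in M. x \<in> K"
    using assms(1) by (auto simp: finite_borel_measure_on_def)
  have f: "f \<in> measurable M borel"
    using assms(2) measurable_cong_sets[OF sets refl] by blast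
  have "AE x in M. f x \<in> L" using K by eventually_elim (rule assms(4))
  then have "AE x in distr M borel f. x \<in> L"
    using assms(3) by (subst AE_distr_iff[OF f]) auto
  then show ?thesis
    unfolding finite_borel_measure_on_def using finite_measure.finite_measure_distr[OF fin f] by simp
qed

context
  fixes K :: "(real^'n) set" and \<mu> \<nu> :: "(real^'n) measure"
  assumes compact: "compact K"
    and \<mu>: "finite_borel_measure_on K \<mu>" and \<nu>: "finite_borel_measure_on K \<nu>"
    and moments: "\<And>\<alpha>. (\<integral>q. monom_q \<alpha> q \<partial>\<mu>) = (\<integral>q. monom_q \<alpha> q \<partial>\<nu>)"
begin

lemma integrable_monom_q:
  assumes "finite_borel_measure_on K M"
  shows "integrable M (monom_q \<alpha>)"
  using assms compact
  by (intro integrable_continuous_on_support borel_measurable_continuous_onI continuous_on_monom_q)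

lemma integral_monomial_span_eq:
  assumes "in_monomial_span g"
  shows "(\<integral>q. g q \<partial>\<mu>) = (\<integral>q. g q \<partial>\<nu>)"
proof -
  obtain A c where A: "finite A" "\<And>q. g q = (\<Sum>\<alpha>\<in>A. c \<alpha> * monom_q \<alpha> q)"
    using assms unfolding in_monomial_span_def by blast
  have "(\<integral>q. g q \<partial>M) = (\<Sum>\<alpha>\<in>A. c \<alpha> * (\<integral>q. monom_q \<alpha> q \<partial>M))" if "finite_borel_measure_on K M" for M
    using integrable_monom_q[OF that] by (simp add: A Bochner_Integration.integral_sum)
  then show ?thesis using \<mu> \<nu> by (simp add: moments)
qed

lemma integral_continuous_eq:
  fixes v :: "real^'n \<Rightarrow> real"
  assumes cont: "continuous_on K v"
  shows "(\<integral>q. indicator K q * v q \<partial>\<mu>) = (\<integral>q. indicator K q * v q \<partial>\<nu>)"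
proof -
  let ?v = "\<lambda>q. indicator K q * v q"
  \<comment> \<open>Approximate \<open>v\<close> uniformly on \<open>K\<close> by polynomials, whose integrals agree by the moment condition.\<close>
  define C where "C = measure \<mu> (space \<mu>) + measure \<nu> (space \<nu>)"
  have int_v: "integrable M ?v" if "finite_borel_measure_on K M" for M
    by (rule integrable_indicator_continuous_on[OF that compact cont])
  have approx: "\<bar>(\<integral>q. ?v q \<partial>\<mu>) - (\<integral>q. ?v q \<partial>\<nu>)\<bar> \<le> e * C" if "0 < e" for e
  proof -
    obtain g where g: "real_polynomial_function g" "\<And>q. q \<in> K \<Longrightarrow> \<bar>v q - g q\<bar> < e"
      using Stone_Weierstrass_real_polynomial_function[OF compact cont \<open>0 < e\<close>] by blast
    have "continuous_on UNIV g"
      using g(1) by (simp add: continuous_at_imp_continuous_on continuous_real_polymonial_function)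
    then have int_g: "integrable M g" if "finite_borel_measure_on K M" for M
      using integrable_continuous_on_support[OF that compact continuous_on_subset
          borel_measurable_continuous_onI] by blast
    have close: "\<bar>(\<integral>q. ?v q \<partial>M) - (\<integral>q. g q \<partial>M)\<bar> \<le> e * measure M (space M)"
      if "finite_borel_measure_on K M" for M
      using g(2) by (intro abs_integral_diff_le[OF that int_v[OF that] int_g[OF that]]) (simp add: less_imp_le)
    have "(\<integral>q. g q \<partial>\<mu>) = (\<integral>q. g q \<partial>\<nu>)"
      by (rule integral_monomial_span_eq[OF real_polynomial_function_in_monomial_span[OF g(1)]])
    with close[OF \<mu>] close[OF \<nu>] show ?thesis
      by (simp only: C_def distrib_left abs_le_iff) linarith
  qed
  have "C \<ge> 0" by (simp add: C_def)
  have "\<bar>(\<integral>q. ?v q \<partial>\<mu>) - (\<integral>q. ?v q \<partial>\<nu>)\<bar> \<le> 0 + e" if "0 < e" for e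
  proof -
    have "0 < e / (C + 1)" using \<open>C \<ge> 0\<close> that by simp
    then have "\<bar>(\<integral>q. ?v q \<partial>\<mu>) - (\<integral>q. ?v q \<partial>\<nu>)\<bar> \<le> e / (C + 1) * C"
      by (rule approx)
    also have "\<dots> \<le> e" using \<open>C \<ge> 0\<close> that by (simp add: field_simps)
    finally show ?thesis by simp
  qed
  then have "\<bar>(\<integral>q. ?v q \<partial>\<mu>) - (\<integral>q. ?v q \<partial>\<nu>)\<bar> \<le> 0"
    by (rule field_le_epsilon)
  then show ?thesis by simp
qed

end

section \<open>The primal and dual programs\<close>

lemma cubeQ_eq_cbox: "cubeQ = cbox (- 1) (1 :: real^'n)"
proof -
  have "t\<^sup>2 \<le> 1 \<longleftrightarrow> -1 \<le> t \<and> t \<le> 1" for t :: real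
    using abs_square_le_1[of t] by auto
  then show ?thesis
    unfolding cubeQ_def mem_box_cart set_eq_iff mem_Collect_eq by (simp add: vector_uminus_component)
qed

lemma compact_cubeQ: "compact cubeQ"
  by (simp add: cubeQ_eq_cbox)

lemma sets_borel_cubeQ [measurable]: "cubeQ \<in> sets borel"
  by (simp add: cubeQ_eq_cbox)

definition lborel_on_cube :: "(real^'n) measure" where
  "lborel_on_cube = density lborel (\<lambda>q. ennreal (indicator cubeQ q))"

lemma finite_borel_measure_on_lborel_on_cube:
  "finite_borel_measure_on cubeQ (lborel_on_cube :: (real^'n) measure)"
proof -
  have "emeasure (lborel_on_cube :: (real^'n) measure) UNIV = emeasure lborel (cubeQ :: (real^'n) set)"
    unfolding lborel_on_cube_def by (subst emeasure_density) (auto simp: cubeQ_eq_cbox ennreal_indicator)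
  also have "\<dots> < \<infinity>" by (rule emeasure_compact_finite[OF compact_cubeQ])
  finally have "finite_measure (lborel_on_cube :: (real^'n) measure)"
    by (intro finite_measureI) (simp add: lborel_on_cube_def)
  moreover have "AE q in lborel_on_cube. q \<in> (cubeQ :: (real^'n) set)"
    unfolding lborel_on_cube_def by (subst AE_density) (auto intro!: AE_I2 simp: indicator_def)
  moreover have "sets (lborel_on_cube :: (real^'n) measure) = sets borel"
    by (simp add: lborel_on_cube_def)
  ultimately show ?thesis by (simp only: finite_borel_measure_on_def)
qed

lemma integral_lborel_on_cube:
  fixes f :: "real^'n \<Rightarrow> real"
  assumes "f \<in> borel_measurable borel"
  shows "(\<integral>q. f q \<partial>lborel_on_cube) = (LINT q:cubeQ|lborel. f q)"
  unfolding lborel_on_cube_def set_lebesgue_integral_def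
  by (rule integral_density) (use assms in \<open>auto simp: cubeQ_eq_cbox\<close>)

lemma zeroSet_iff: "(q, x, y) \<in> zeroSet m p \<longleftrightarrow> q \<in> cubeQ \<and> pval m p q (Complex x y) = 0"
  by (auto simp: zeroSet_def p_Re_def p_Im_def complex_eq_iff)

lemma finite_roots_on_vertical_line:
  assumes "finite {s. f s = 0}"
  shows "finite {y. f (Complex a y) = 0}"
proof -
  have "inj (Complex a)" by (rule injI) simp
  then show ?thesis using finite_vimageI[OF assms] by (simp add: vimage_def)
qed

text \<open>Among the roots on the rightmost vertical line, the one of least imaginary part; choosing it
  by \<open>Min\<close> keeps the choice measurable in parameters (lemma \<open>borel_measurable_Min_section\<close>).\<close>
definition rightmost_root :: "(complex \<Rightarrow> complex) \<Rightarrow> complex" where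
  "rightmost_root f = Complex (root_abscissa f) (Min {y. f (Complex (root_abscissa f) y) = 0})"

lemma rightmost_root_is_root:
  assumes "finite {s. f s = 0}" "{s. f s = 0} \<noteq> {}"
  shows "f (rightmost_root f) = 0"
proof -
  let ?Y = "{y. f (Complex (root_abscissa f) y) = 0}"
  obtain s where "f s = 0" "Re s = root_abscissa f"
    using root_abscissa_attained[OF assms] .
  then have "Complex (root_abscissa f) (Im s) = s" by (simp add: complex_eq_iff)
  with \<open>f s = 0\<close> have "Im s \<in> ?Y" by simp
  moreover have "finite ?Y" by (rule finite_roots_on_vertical_line[OF assms(1)])
  ultimately have "Min ?Y \<in> ?Y" using Min_in by blast
  then show ?thesis by (simp add: rightmost_root_def)
qed

definition root_measure :: "nat \<Rightarrow> (nat \<Rightarrow> real^'n \<Rightarrow> real) \<Rightarrow> ((real^'n) \<times> real \<times> real) measure" where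
  "root_measure m p = distr lborel_on_cube borel
     (\<lambda>q. (q, Re (rightmost_root (pval m p q)), Im (rightmost_root (pval m p q))))"

context
  fixes m :: nat and p :: "nat \<Rightarrow> real^'n \<Rightarrow> real"
  assumes deg: "1 \<le> m" and monic: "p m = (\<lambda>q. 1)"
    and cont: "\<And>k q. k \<le> m \<Longrightarrow> isCont (p k) q"
begin

lemma pval_eq: "pval m p q = (\<lambda>s. \<Sum>k\<le>m. complex_of_real (p k q) * s ^ k)"
  by (simp add: fun_eq_iff pval_def)

lemma pval_roots_finite: "finite {s. pval m p q s = 0}"
  and pval_roots_nonempty: "{s. pval m p q s = 0} \<noteq> {}"
  using monic_roots_finite_nonempty[of "\<lambda>k. complex_of_real (p k q)" m] deg monic
  by (simp_all add: pval_eq)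

lemma isCont_root_abscissa_pval: "isCont (\<lambda>q. root_abscissa (pval m p q)) q"
  unfolding pval_eq using deg monic
  by (intro isCont_root_abscissa continuous_of_real cont) auto

lemma continuous_on_pval: "continuous_on UNIV (\<lambda>z. pval m p (fst z) (snd z))"
proof -
  have "continuous_on UNIV (\<lambda>z. p k (fst z))" if "k \<le> m" for k
    using cont[OF that] by (intro continuous_on_compose2[of UNIV "p k" UNIV fst])
      (auto intro: continuous_at_imp_continuous_on continuous_intros)
  then show ?thesis unfolding pval_def
    by (intro continuous_intros) (auto intro!: continuous_on_of_real)
qed

lemma continuous_on_pval_Complex:
  assumes "continuous_on S a" "continuous_on S b" "continuous_on S f"
  shows "continuous_on S (\<lambda>z. pval m p (f z) (Complex (a z) (b z)))"
proof -
  have eq: "(\<lambda>z. pval m p (f z) (Complex (a z) (b z))) =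
      (\<lambda>w. pval m p (fst w) (snd w)) \<circ> (\<lambda>z. (f z, complex_of_real (a z) + \<i> * complex_of_real (b z)))"
    by (simp add: o_def Complex_eq)
  show ?thesis unfolding eq
    using assms by (intro continuous_on_compose continuous_intros continuous_on_subset[OF continuous_on_pval]) auto
qed

lemma compact_zeroSet: "compact (zeroSet m p)"
proof -
  obtain B where B: "\<And>q. q \<in> cubeQ \<Longrightarrow> 1 + (\<Sum>k<m. norm (complex_of_real (p k q))) \<le> B"
  proof -
    have "continuous_on cubeQ (\<lambda>q. 1 + (\<Sum>k<m. norm (complex_of_real (p k q))))"
      using cont by (intro continuous_intros continuous_at_imp_continuous_on) auto
    then show ?thesis
      using compact_imp_bounded[OF compact_continuous_image[OF _ compact_cubeQ]] that
      by (force simp: bounded_iff)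
  qed
  have "zeroSet m p \<subseteq> cubeQ \<times> cball 0 B"
  proof clarify
    fix q x y assume "(q, x, y) \<in> zeroSet m p"
    then have q: "q \<in> cubeQ" and root: "pval m p q (Complex x y) = 0" by (auto simp: zeroSet_iff)
    have "norm (x, y) = norm (Complex x y)" by (simp add: norm_Pair complex_norm)
    also have "\<dots> \<le> B"
      using monic_root_norm_le[of "\<lambda>k. complex_of_real (p k q)" m] root deg monic B[OF q]
      by (force simp: pval_eq)
    finally show "q \<in> cubeQ \<and> (x, y) \<in> cball 0 B" using q by simp
  qed
  moreover have "closed (zeroSet m p)"
  proof -
    have "zeroSet m p = (cubeQ \<times> UNIV) \<inter> {z. pval m p (fst z) (Complex (fst (snd z)) (snd (snd z))) = 0}"
      by (auto simp: zeroSet_iff)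
    also have "closed \<dots>"
      by (intro closed_Int closed_Times compact_imp_closed[OF compact_cubeQ] closed_UNIV
          closed_Collect_eq continuous_on_pval_Complex continuous_intros)
    finally show ?thesis .
  qed
  ultimately show ?thesis
    using bounded_subset[OF compact_imp_bounded[OF compact_Times[OF compact_cubeQ compact_cball]]]
    by (simp add: compact_eq_bounded_closed)
qed

lemma continuous_on_root_abscissa_pval: "continuous_on S (\<lambda>q. root_abscissa (pval m p q))"
  by (intro continuous_at_imp_continuous_on ballI isCont_root_abscissa_pval)

lemma borel_measurable_rightmost_root_Im:
  "(\<lambda>q. Im (rightmost_root (pval m p q))) \<in> borel_measurable borel"
proof -
  let ?F = "\<lambda>q. root_abscissa (pval m p q)"
  define S where "S = {z. pval m p (fst z) (Complex (?F (fst z)) (snd z)) = 0}"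
  have "continuous_on UNIV (\<lambda>z::(real^'n) \<times> real. ?F (fst z))"
    by (rule continuous_on_compose2[OF continuous_on_root_abscissa_pval continuous_on_fst]) auto
  then have "closed S"
    unfolding S_def by (intro closed_Collect_eq continuous_on_pval_Complex continuous_on_fst
        continuous_on_snd continuous_on_id continuous_on_const)
  moreover have "finite {y. (q, y) \<in> S}" for q
    unfolding S_def using finite_roots_on_vertical_line[OF pval_roots_finite] by simp
  moreover have "(q, Im (rightmost_root (pval m p q))) \<in> S" for q
    using rightmost_root_is_root[OF pval_roots_finite pval_roots_nonempty]
    by (simp add: S_def rightmost_root_def)
  then have "\<exists>y. (q, y) \<in> S" for q by blast
  ultimately have "(\<lambda>q. Min {y. (q, y) \<in> S}) \<in> borel_measurable borel"
    by (rule borel_measurable_Min_section)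
  then show ?thesis by (simp add: S_def rightmost_root_def)
qed

lemma meas_on_Z_iff: "meas_on_Z m p \<mu> \<longleftrightarrow> finite_borel_measure_on (zeroSet m p) \<mu>"
proof -
  have "- zeroSet m p \<in> sets borel"
    using compact_imp_closed[OF compact_zeroSet] by (intro borel_open) auto
  then have "(AE z in \<mu>. z \<in> zeroSet m p) \<longleftrightarrow> emeasure \<mu> (- zeroSet m p) = 0" if "sets \<mu> = sets borel"
    using that sets_eq_imp_space_eq[OF that] by (intro AE_iff_measurable) auto
  then show ?thesis
    unfolding meas_on_Z_def finite_borel_measure_on_def by blast
qed

lemma measurable_root_measure_map:
  "(\<lambda>q. (q, Re (rightmost_root (pval m p q)), Im (rightmost_root (pval m p q))))
     \<in> measurable lborel_on_cube borel"
proof -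
  have "(\<lambda>q. Re (rightmost_root (pval m p q))) \<in> borel_measurable borel"
    unfolding rightmost_root_def using continuous_on_root_abscissa_pval
    by (simp add: borel_measurable_continuous_onI)
  with borel_measurable_rightmost_root_Im
  have "(\<lambda>q. (q, Re (rightmost_root (pval m p q)), Im (rightmost_root (pval m p q))))
      \<in> borel_measurable borel"
    by measurable
  then show ?thesis by (simp add: lborel_on_cube_def)
qed

lemma dual_feasible_root_measure: "dual_feasible m p (root_measure m p)"
proof -
  let ?T = "\<lambda>q. (q, Re (rightmost_root (pval m p q)), Im (rightmost_root (pval m p q)))"
  have T: "?T \<in> borel_measurable borel"
    using measurable_root_measure_map by (simp add: lborel_on_cube_def)
  have "?T q \<in> zeroSet m p" if "q \<in> cubeQ" for q
    using that rightmost_root_is_root[OF pval_roots_finite pval_roots_nonempty] by (simp add: zeroSet_iff)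
  then have "finite_borel_measure_on (zeroSet m p) (root_measure m p)"
    unfolding root_measure_def using compact_zeroSet
    by (intro finite_borel_measure_on_distr[OF finite_borel_measure_on_lborel_on_cube T] borel_compact)
  moreover have "(\<integral>z. monom_q \<alpha> (fst z) \<partial>root_measure m p) = (LINT q:cubeQ|lborel. monom_q \<alpha> q)" for \<alpha>
  proof -
    have "monom_q \<alpha> \<in> borel_measurable borel"
      by (rule borel_measurable_continuous_onI[OF continuous_on_monom_q])
    then have "(\<integral>z. monom_q \<alpha> (fst z) \<partial>root_measure m p) = (\<integral>q. monom_q \<alpha> q \<partial>lborel_on_cube)"
      unfolding root_measure_def
      by (subst integral_distr[OF measurable_root_measure_map borel_measurable_fst_compose]) simp_all
    also have "\<dots> = (LINT q:cubeQ|lborel. monom_q \<alpha> q)"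
      by (rule integral_lborel_on_cube) fact
    finally show ?thesis .
  qed
  ultimately show ?thesis by (simp add: dual_feasible_def meas_on_Z_iff)
qed

lemma dual_objective_root_measure:
  "dual_objective (root_measure m p) = (LINT q:cubeQ|lborel. root_abscissa (pval m p q))"
proof -
  have "(\<lambda>z::(real^'n) \<times> real \<times> real. fst (snd z)) \<in> borel_measurable borel"
    by (intro borel_measurable_continuous_onI continuous_intros)
  then have "dual_objective (root_measure m p) = (\<integral>q. root_abscissa (pval m p q) \<partial>lborel_on_cube)"
    unfolding root_measure_def dual_objective_def
    by (subst integral_distr[OF measurable_root_measure_map]) (simp_all add: rightmost_root_def)
  also have "\<dots> = (LINT q:cubeQ|lborel. root_abscissa (pval m p q))"
    by (intro integral_lborel_on_cube borel_measurable_continuous_onI continuous_on_root_abscissa_pval)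
  finally show ?thesis .
qed

lemma integral_dual_feasible_marginal:
  fixes v :: "real^'n \<Rightarrow> real"
  assumes \<mu>: "dual_feasible m p \<mu>" and v: "continuous_on cubeQ v"
  shows "integrable \<mu> (\<lambda>z. indicator cubeQ (fst z) * v (fst z))"
    and "(\<integral>z. indicator cubeQ (fst z) * v (fst z) \<partial>\<mu>) = (LINT q:cubeQ|lborel. v q)"
proof -
  let ?v = "\<lambda>q. indicator cubeQ q * v q"
  have Z: "finite_borel_measure_on (zeroSet m p) \<mu>"
    and moments: "\<And>\<alpha>. (\<integral>z. monom_q \<alpha> (fst z) \<partial>\<mu>) = (LINT q:cubeQ|lborel. monom_q \<alpha> q)"
    using \<mu> by (auto simp: dual_feasible_def meas_on_Z_iff)
  have fst_borel: "fst \<in> borel_measurable (borel :: ((real^'n) \<times> real \<times> real) measure)"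
    by (intro borel_measurable_continuous_onI continuous_on_fst continuous_on_id)
  have "sets \<mu> = sets borel" using Z by (simp add: finite_borel_measure_on_def)
  then have fst: "fst \<in> measurable \<mu> borel"
    using fst_borel measurable_cong_sets[OF _ refl] by blast
  define \<nu> where "\<nu> = distr \<mu> borel fst"
  have \<nu>: "finite_borel_measure_on cubeQ \<nu>"
    unfolding \<nu>_def using Z fst_borel by (rule finite_borel_measure_on_distr) (auto simp: zeroSet_def)
  have v_meas: "?v \<in> borel_measurable borel"
    using borel_measurable_continuous_on_indicator[OF sets_borel_cubeQ v] by simp
  have "integrable \<nu> ?v"
    by (rule integrable_indicator_continuous_on[OF \<nu> compact_cubeQ v])
  then show "integrable \<mu> (\<lambda>z. ?v (fst z))"
    unfolding \<nu>_def using integrable_distr_eq[OF fst v_meas] by simp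
  have "(\<integral>q. monom_q \<alpha> q \<partial>\<nu>) = (\<integral>q. monom_q \<alpha> q \<partial>lborel_on_cube)" for \<alpha>
  proof -
    have "monom_q \<alpha> \<in> borel_measurable borel"
      by (rule borel_measurable_continuous_onI[OF continuous_on_monom_q])
    then show ?thesis
      unfolding \<nu>_def by (simp add: integral_distr[OF fst] moments integral_lborel_on_cube)
  qed
  then have v_eq: "(\<integral>q. ?v q \<partial>\<nu>) = (\<integral>q. ?v q \<partial>lborel_on_cube)"
    by (rule integral_continuous_eq[OF compact_cubeQ \<nu> finite_borel_measure_on_lborel_on_cube _ v])
  have "(\<integral>z. ?v (fst z) \<partial>\<mu>) = (\<integral>q. ?v q \<partial>\<nu>)"
    unfolding \<nu>_def by (rule integral_distr[OF fst v_meas, symmetric])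
  also have "\<dots> = (LINT q:cubeQ|lborel. ?v q)"
    by (simp add: v_eq integral_lborel_on_cube v_meas)
  also have "\<dots> = (LINT q:cubeQ|lborel. v q)"
    unfolding set_lebesgue_integral_def by (intro Bochner_Integration.integral_cong) (auto simp: indicator_def)
  finally show "(\<integral>z. ?v (fst z) \<partial>\<mu>) = (LINT q:cubeQ|lborel. v q)" .
qed

lemma dual_objective_le:
  fixes v :: "real^'n \<Rightarrow> real"
  assumes \<mu>: "dual_feasible m p \<mu>" and v: "continuous_on cubeQ v"
    and v_ge: "\<forall>(q, x, y)\<in>zeroSet m p. v q - x \<ge> 0"
  shows "dual_objective \<mu> \<le> (LINT q:cubeQ|lborel. v q)"
proof -
  have Z: "finite_borel_measure_on (zeroSet m p) \<mu>"
    using \<mu> by (simp add: dual_feasible_def meas_on_Z_iff)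
  have int_x: "integrable \<mu> (\<lambda>z. fst (snd z))"
    by (intro integrable_continuous_on_support[OF Z compact_zeroSet]
        borel_measurable_continuous_onI continuous_intros)
  have "AE z in \<mu>. z \<in> zeroSet m p" using Z by (simp add: finite_borel_measure_on_def)
  then have "AE z in \<mu>. fst (snd z) \<le> indicator cubeQ (fst z) * v (fst z)"
    by eventually_elim (use v_ge in \<open>force simp: zeroSet_def\<close>)
  then have "dual_objective \<mu> \<le> (\<integral>z. indicator cubeQ (fst z) * v (fst z) \<partial>\<mu>)"
    unfolding dual_objective_def
    by (rule integral_mono_AE[OF int_x integral_dual_feasible_marginal(1)[OF \<mu> v]])
  then show ?thesis by (simp add: integral_dual_feasible_marginal(2)[OF \<mu> v])
qed

lemma dual_value_le_primal_value: "dual_value m p \<le> primal_value m p"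
  unfolding dual_value_def primal_value_def
proof (rule Sup_least, rule Inf_greatest)
  fix a b
  assume "a \<in> {ereal (dual_objective \<mu>) |\<mu>. dual_feasible m p \<mu>}"
    and "b \<in> {ereal (LINT q:cubeQ|lborel. v q) |v.
        continuous_on cubeQ v \<and> (\<forall>(q, x, y)\<in>zeroSet m p. v q - x \<ge> 0)}"
  then show "a \<le> b" using dual_objective_le by auto
qed

lemma primal_value_le_integral_root_abscissa:
  "primal_value m p \<le> ereal (LINT q:cubeQ|lborel. root_abscissa (pval m p q))"
proof -
  have "root_abscissa (pval m p q) - x \<ge> 0" if "(q, x, y) \<in> zeroSet m p" for q x y
  proof -
    have "Re (Complex x y) \<le> root_abscissa (pval m p q)"
      using that by (intro root_abscissa_ge pval_roots_finite) (simp add: zeroSet_iff)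
    then show ?thesis by simp
  qed
  then show ?thesis
    unfolding primal_value_def using continuous_on_root_abscissa_pval
    by (intro Inf_lower) blast
qed

end

theorem lemma1:
  fixes m :: nat and p :: "nat \<Rightarrow> real^'n \<Rightarrow> real"
  assumes "m \<ge> 1"
    and "\<And>k. k \<le> m \<Longrightarrow> real_polynomial_function (p k)"
    and "p m = (\<lambda>q. 1)"
  shows "(\<exists>\<mu>. dual_feasible m p \<mu> \<and> ereal (dual_objective \<mu>) = dual_value m p)
         \<and> primal_value m p = dual_value m p"
proof -
  have cont: "\<And>k q. k \<le> m \<Longrightarrow> isCont (p k) q"
    using assms(2) continuous_real_polymonial_function by blast
  note feasible = dual_feasible_root_measure[of m p, OF assms(1,3) cont]
  define I where "I = (LINT q:cubeQ|lborel. root_abscissa (pval m p q))"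
  have objective: "dual_objective (root_measure m p) = I"
    unfolding I_def by (rule dual_objective_root_measure[of m p, OF assms(1,3) cont])
  have "ereal I \<le> dual_value m p"
    unfolding dual_value_def using feasible objective by (intro Sup_upper) auto
  moreover have "dual_value m p \<le> primal_value m p"
    by (rule dual_value_le_primal_value[of m p, OF assms(1,3) cont])
  moreover have "primal_value m p \<le> ereal I"
    unfolding I_def by (rule primal_value_le_integral_root_abscissa[of m p, OF assms(1,3) cont])
  ultimately show ?thesis using feasible objective by auto
qed

end
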